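(* Let $G$ be a finite group and $H$ a normal subgroup of $G$. Suppose that $|H|$ and $|G/H|$ are odd and that both $H$ and the quotient group $G/H$ are symmetric harmonious. Then $G$ is symmetric harmonious.
   Context: Let $G$ be a finite group of order $\ell$ with identity $1_G$. A harmonious sequence in $G$ is an ordering $g_0,g_1,\ldots,g_{\ell-1}$ of all the elements of $G$ such that the consecutive products $g_0g_1, g_1g_2, \ldots, g_{\ell-2}g_{\ell-1}, g_{\ell-1}g_0$ are also all the elements of $G$, each appearing exactly once. $G$ is called symmetric harmonious if it admits a harmonious sequence $g_0,\ldots,g_{\ell-1}$ that additionally satisfies $g_i g_{\ell-i}=1_G$ for all $1\le i\le \ell-1$. *)

theory Defs
  imports "HOL-Algebra.Algebra"
begin

definition harmonious_seq :: "('a, 'b) monoid_scheme \<Rightarrow> (nat \<Rightarrow> 'a) \<Rightarrow> bool" where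
  "harmonious_seq G g \<longleftrightarrow>
     (let l = card (carrier G) in
       bij_betw g {0..<l} (carrier G) \<and>
       bij_betw (\<lambda>i. g i \<otimes>\<^bsub>G\<^esub> g ((i + 1) mod l)) {0..<l} (carrier G))"

definition symmetric_harmonious :: "('a, 'b) monoid_scheme \<Rightarrow> bool" where
  "symmetric_harmonious G \<longleftrightarrow>
     (\<exists>g. harmonious_seq G g \<and>
        (\<forall>i. 1 \<le> i \<and> i \<le> card (carrier G) - 1 \<longrightarrow>
              g i \<otimes>\<^bsub>G\<^esub> g (card (carrier G) - i) = \<one>\<^bsub>G\<^esub>))"

end

theory Submission
  imports Defs
begin

(* Let |H| = m, |G/H| = n = 2r + 1, let h_0, ..., h_(m-1) and c_0, ..., c_(n-1) be symmetric
   harmonious sequences of H and G/H, and choose representatives a_j of c_j with a_0 = 1 and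
   a_(n-j) = a_j^-1.  With the prefix products P_j = a_0 ... a_(j-1), the sequence of G runs through
   m rounds; the j-th element of round t is P_j^-1 h_(t + s_j) P_(j+1) (block j t below), where
   the shift s_j is 0 for j <= r and 1 for j > r.  This element lies in c_j, and the product of
   consecutive elements telescopes to P_j^-1 h_(t + s_j) h_(t + s_(j+1)) P_(j+2): its coset pins
   down j, and the middle factor is a square h_u^2 or a harmonious product h_u h_(u+1), which pins
   down t because squaring is injective in a group of odd order.  Since P_(n+1-j) = P_j and
   s_j + s_(n-j) = 1, the elements at positions k and nm - k are mutually inverse. *)

lemma (in group) odd_order_square_inj:
  assumes "odd (order G)" "x \<in> carrier G" "y \<in> carrier G" "x \<otimes> x = y \<otimes> y"
  shows "x = y"
proof -
  obtain q where q: "order G = 2 * q + 1"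
    using assms(1) oddE by blast
  have root: "z = (z \<otimes> z) [^] Suc q" if "z \<in> carrier G" for z
  proof -
    have square: "z \<otimes> z = z [^] (2::nat)"
      using that by (simp add: numeral_2_eq_2)
    have exponent: "2 * Suc q = Suc (order G)"
      using q by simp
    have "(z \<otimes> z) [^] Suc q = z [^] (2 * Suc q)"
      unfolding square by (rule nat_pow_pow[OF that])
    also have "\<dots> = z [^] order G \<otimes> z"
      unfolding exponent by simp
    also have "\<dots> = z"
      using that by (simp add: pow_order_eq_1)
    finally show ?thesis ..
  qed
  show ?thesis
    using root[OF assms(2)] root[OF assms(3)] assms(4) by simp
qed

lemma (in group) inv_cancel_left [simp]:
  "x \<in> carrier G \<Longrightarrow> y \<in> carrier G \<Longrightarrow> x \<otimes> (inv x \<otimes> y) = y"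
  "x \<in> carrier G \<Longrightarrow> y \<in> carrier G \<Longrightarrow> inv x \<otimes> (x \<otimes> y) = y"
  by (simp_all add: m_assoc[symmetric])

lemma add_mod_right_cancel:
  fixes t t' s l :: nat
  assumes "(t + s) mod l = (t' + s) mod l" "t < l" "t' < l"
  shows "t = t'"
proof -
  have "a = b" if "b \<le> a" "(a + s) mod l = (b + s) mod l" "a < l" for a b :: nat
  proof -
    have "l dvd a - b"
      using that mod_eq_dvd_iff_nat[of "b + s" "a + s" l] by simp
    then show ?thesis
      using that by (auto dest: dvd_imp_le)
  qed
  then show ?thesis
    using assms by (metis nat_le_linear)
qed

lemma mod_complement_if_add_mod_eq_0:
  fixes u v l :: nat
  assumes l: "0 < l" and uv: "(u + v) mod l = 0" and u: "u mod l \<noteq> 0"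
  shows "v mod l = l - u mod l"
proof -
  have "l dvd u mod l + v mod l"
    using uv by (simp add: mod_add_eq dvd_eq_mod_eq_0)
  then obtain k where k: "u mod l + v mod l = l * k"
    by blast
  have "u mod l + v mod l < l * 2"
    using mod_less_divisor[OF l, of u] mod_less_divisor[OF l, of v] by linarith
  then have "k = 1"
    using k u by (cases k) (auto simp: mult_less_cancel1)
  then show ?thesis
    using k by simp
qed

definition symmetric_harmonious_seq :: "('a, 'b) monoid_scheme \<Rightarrow> (nat \<Rightarrow> 'a) \<Rightarrow> bool" where
  "symmetric_harmonious_seq G g \<longleftrightarrow>
     harmonious_seq G g \<and>
     (\<forall>i \<in> {1..<card (carrier G)}. g i \<otimes>\<^bsub>G\<^esub> g (card (carrier G) - i) = \<one>\<^bsub>G\<^esub>)"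

lemma symmetric_harmonious_iff_seq:
  "symmetric_harmonious G \<longleftrightarrow> (\<exists>g. symmetric_harmonious_seq G g)"
  unfolding symmetric_harmonious_def symmetric_harmonious_seq_def
  by (intro ex_cong1 conj_cong refl) auto

lemma harmonious_seq_iff:
  "harmonious_seq G g \<longleftrightarrow>
     bij_betw g {0..<order G} (carrier G) \<and>
     bij_betw (\<lambda>i. g i \<otimes>\<^bsub>G\<^esub> g ((i + 1) mod order G)) {0..<order G} (carrier G)"
  by (simp add: harmonious_seq_def order_def Let_def)

lemma harmonious_seq_closed: "harmonious_seq G g \<Longrightarrow> i < order G \<Longrightarrow> g i \<in> carrier G"
  by (auto simp: harmonious_seq_iff dest: bij_betwE)

lemma (in group) symmetric_harmonious_seq_zero:
  assumes odd: "odd (order G)" and g: "symmetric_harmonious_seq G g"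
  shows "g 0 = \<one>"
proof -
  have bij: "bij_betw g {0..<order G} (carrier G)"
    and mirror: "\<And>i. 0 < i \<Longrightarrow> i < order G \<Longrightarrow> g i \<otimes> g (order G - i) = \<one>"
    using g by (auto simp: symmetric_harmonious_seq_def harmonious_seq_iff order_def)
  have closed: "\<And>i. i < order G \<Longrightarrow> g i \<in> carrier G"
    using bij bij_betwE by fastforce
  have g0: "g 0 \<in> carrier G"
    using closed odd_pos[OF odd] .
  \<comment> \<open>Inversion sends g i to g (order G - i) for 0 < i, so only g 0 can be the inverse of g 0.\<close>
  obtain i where i: "i < order G" "g i = inv (g 0)"
    using bij_betw_imp_surj_on[OF bij] g0 by (metis atLeastLessThan_iff imageE inv_closed)
  have "i = 0"
  proof (rule ccontr)
    assume "i \<noteq> 0"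
    then have product: "g i \<otimes> g (order G - i) = \<one>"
      and closed_i: "g i \<in> carrier G" "g (order G - i) \<in> carrier G"
      using mirror[of i] closed i by auto
    have "g (order G - i) = inv (g i)"
      using inv_equality[OF inv_comm[OF product closed_i] closed_i] by simp
    then have "g (order G - i) = g 0"
      using i g0 by simp
    then show False
      using bij_betw_imp_inj_on[OF bij] i \<open>i \<noteq> 0\<close> by (auto dest: inj_onD)
  qed
  then have "g 0 \<otimes> g 0 = \<one> \<otimes> \<one>"
    using i g0 by (metis r_inv l_one one_closed)
  then show ?thesis
    using odd_order_square_inj[OF odd g0] by simp
qed

lemma (in group) symmetric_harmonious_seq_inverse_mod:
  assumes odd: "odd (order G)" and g: "symmetric_harmonious_seq G g"
    and uv: "(u + v) mod order G = 0"
  shows "g (u mod order G) \<otimes> g (v mod order G) = \<one>"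
proof (cases "u mod order G = 0")
  case True
  then have "v mod order G = 0"
    using uv by (metis add_0 mod_add_left_eq)
  then show ?thesis
    using True symmetric_harmonious_seq_zero[OF odd g] by simp
next
  case False
  then have "v mod order G = order G - u mod order G"
    using mod_complement_if_add_mod_eq_0[OF odd_pos[OF odd] uv] by simp
  moreover have "u mod order G \<in> {1..<card (carrier G)}"
    using False odd_pos[OF odd] by (simp add: order_def)
  ultimately show ?thesis
    using g by (simp add: symmetric_harmonious_seq_def order_def)
qed

lemma (in group) harmonious_seq_shifted_products_inj:
  assumes odd: "odd (order G)" and g: "harmonious_seq G g" and s: "s \<le> s'" "s' \<le> 1"
  shows "inj_on (\<lambda>t. g ((t + s) mod order G) \<otimes> g ((t + s') mod order G)) {0..<order G}"
proof (cases "s = s'")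
  case True
  show ?thesis
  proof (rule inj_onI)
    fix t t'
    assume t: "t \<in> {0..<order G}" "t' \<in> {0..<order G}"
      and eq: "g ((t + s) mod order G) \<otimes> g ((t + s') mod order G) =
        g ((t' + s) mod order G) \<otimes> g ((t' + s') mod order G)"
    have closed: "g (i mod order G) \<in> carrier G" for i
      using harmonious_seq_closed[OF g] odd_pos[OF odd] by simp
    have "g ((t + s) mod order G) = g ((t' + s) mod order G)"
      using odd_order_square_inj[OF odd closed closed] eq True by simp
    moreover have "inj_on g {0..<order G}"
      using g by (auto simp: harmonious_seq_iff dest: bij_betw_imp_inj_on)
    ultimately have "(t + s) mod order G = (t' + s) mod order G"
      using odd_pos[OF odd] by (auto dest: inj_onD)
    then show "t = t'"
      using t by (auto intro: add_mod_right_cancel)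
  qed
next
  case False
  then have "s = 0" "s' = 1"
    using s by auto
  then show ?thesis
    using g by (auto simp: harmonious_seq_iff inj_on_def dest: bij_betw_imp_inj_on)
qed

lemma bij_betw_block_index:
  fixes n m :: nat
  shows "bij_betw (\<lambda>(j, t). j + n * t) ({0..<n} \<times> {0..<m}) {0..<n * m}"
proof (rule bij_betwI[where g = "\<lambda>k. (k mod n, k div n)"])
  have "j + n * t < n * m" if "j < n" "t < m" for j t
  proof -
    have "j + n * t < n * Suc t"
      using that by simp
    also have "\<dots> \<le> n * m"
      using that by (intro mult_le_mono2) simp
    finally show ?thesis .
  qed
  then show "(\<lambda>(j, t). j + n * t) \<in> {0..<n} \<times> {0..<m} \<rightarrow> {0..<n * m}"
    by auto
  have "k mod n < n \<and> k div n < m" if "k < n * m" for k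
    using that by (cases n) (auto simp: less_mult_imp_div_less mult.commute)
  then show "(\<lambda>k. (k mod n, k div n)) \<in> {0..<n * m} \<rightarrow> {0..<n} \<times> {0..<m}"
    by auto
qed auto

lemma bij_betw_block_indexI:
  fixes f :: "nat \<Rightarrow> 'a"
  assumes inj: "inj_on (\<lambda>(j, t). f (j + n * t)) ({0..<n} \<times> {0..<m})"
    and into: "\<And>j t. j < n \<Longrightarrow> t < m \<Longrightarrow> f (j + n * t) \<in> A"
    and card: "finite A" "card A = n * m"
  shows "bij_betw f {0..<n * m} A"
proof -
  have "(\<lambda>(j, t). f (j + n * t)) ` ({0..<n} \<times> {0..<m}) = A"
    using into card card_image[OF inj] by (intro card_subset_eq) auto
  then have "bij_betw (f \<circ> (\<lambda>(j, t). j + n * t)) ({0..<n} \<times> {0..<m}) A"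
    using inj by (simp add: bij_betw_def comp_def case_prod_unfold)
  then show ?thesis
    using bij_betw_comp_iff[OF bij_betw_block_index] by blast
qed

lemma block_index_Suc_mod:
  fixes n m j t :: nat
  assumes "j < n" "t < m"
  shows "(j + n * t + 1) mod (n * m) = (if j + 1 < n then (j + 1) + n * t else n * ((t + 1) mod m))"
proof (cases "j + 1 < n")
  case True
  have "(j + 1) + n * t < n * m"
    using bij_betw_apply[OF bij_betw_block_index, of "(j + 1, t)" n m] True assms by simp
  then show ?thesis
    using True by simp
next
  case False
  then have "j + n * t + 1 = n * (t + 1)"
    using assms by simp
  then have "(j + n * t + 1) mod (n * m) = n * ((t + 1) mod m)"
    by (simp only: mod_mult_mult1)
  then show ?thesis
    using False by simp
qed

lemma block_index_mirror:
  fixes n m j t :: nat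
  assumes "j < n" "t < m"
  shows "n * m - (j + n * t) = (if j = 0 then n * (m - t) else (n - j) + n * (m - 1 - t))"
proof -
  obtain u where "m = t + 1 + u"
    using assms(2) less_imp_Suc_add by fastforce
  then show ?thesis
    using assms by (auto simp: algebra_simps)
qed

primrec prefix_prod :: "('a, 'b) monoid_scheme \<Rightarrow> (nat \<Rightarrow> 'a) \<Rightarrow> nat \<Rightarrow> 'a" where
  "prefix_prod G a 0 = \<one>\<^bsub>G\<^esub>"
| "prefix_prod G a (Suc k) = prefix_prod G a k \<otimes>\<^bsub>G\<^esub> a k"

(* Unfolding prefix_prod G a (Suc k) would destroy the telescoping in the products below. *)
declare prefix_prod.simps(2) [simp del]

lemma (in monoid) prefix_prod_closed:
  assumes "\<And>j. j < k \<Longrightarrow> a j \<in> carrier G"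
  shows "prefix_prod G a k \<in> carrier G"
  using assms by (induction k) (auto simp: prefix_prod.simps)

lemma (in group) prefix_prod_mirror:
  assumes odd: "odd n" and a: "\<And>j. j < n \<Longrightarrow> a j \<in> carrier G"
    and mirror: "\<And>j. 0 < j \<Longrightarrow> j < n \<Longrightarrow> a (n - j) = inv (a j)"
    and k: "0 < k" "k \<le> n"
  shows "prefix_prod G a (n + 1 - k) = prefix_prod G a k"
proof -
  obtain r where r: "n = 2 * r + 1"
    using odd oddE by blast
  \<comment> \<open>Outwards from the middle: a (r + 1 + i) cancels a (r - i).\<close>
  have middle: "prefix_prod G a (r + 1 + i) = prefix_prod G a (r + 1 - i)" if "i \<le> r" for i
    using that
  proof (induction i)
    case (Suc i)
    have inverse: "a (r + 1 + i) = inv (a (r - i))"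
      using mirror[of "r - i"] r Suc.prems by (simp add: Suc_diff_Suc numeral_2_eq_2)
    have split: "prefix_prod G a (r + 1 - i) = prefix_prod G a (r - i) \<otimes> a (r - i)"
      using Suc.prems by (simp add: Suc_diff_le prefix_prod.simps)
    have closed: "prefix_prod G a (r - i) \<in> carrier G" "a (r - i) \<in> carrier G"
      using a r by (auto intro!: prefix_prod_closed)
    have "prefix_prod G a (r + 1 + Suc i) = prefix_prod G a (r + 1 - i) \<otimes> inv (a (r - i))"
      using Suc inverse by (simp add: prefix_prod.simps)
    also have "\<dots> = prefix_prod G a (r - i)"
      unfolding split using closed by (simp add: m_assoc)
    finally show ?case
      by simp
  qed simp
  show ?thesis
  proof (cases "k \<le> r + 1")
    case True
    then have "n + 1 - k = r + 1 + (r + 1 - k)" "k = r + 1 - (r + 1 - k)" "r + 1 - k \<le> r"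
      using r k by auto
    then show ?thesis
      using middle[of "r + 1 - k"] by metis
  next
    case False
    then have "n + 1 - k = r + 1 - (k - r - 1)" "k = r + 1 + (k - r - 1)" "k - r - 1 \<le> r"
      using r k by auto
    then show ?thesis
      using middle[of "k - r - 1"] by metis
  qed
qed

lemma (in normal) rcos_conj_mult:
  assumes "y \<in> H" "u \<in> carrier G" "v \<in> carrier G"
  shows "H #> (inv u \<otimes> y \<otimes> v) = H #> (inv u \<otimes> v)"
proof -
  have conj: "inv u \<otimes> y \<otimes> u \<in> H"
    using assms by (simp add: inv_op_closed1)
  have "H #> (inv u \<otimes> y \<otimes> v) = H #> ((inv u \<otimes> y \<otimes> u) \<otimes> (inv u \<otimes> v))"
    using assms by (simp add: m_assoc)
  also have "\<dots> = (H #> (inv u \<otimes> y \<otimes> u)) #> (inv u \<otimes> v)"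
    using assms conj subset by (simp add: coset_mult_assoc)
  also have "\<dots> = H #> (inv u \<otimes> v)"
    using conj by (simp add: rcos_const)
  finally show ?thesis .
qed

lemma (in normal) rcos_inv_eq:
  assumes "x \<in> carrier G" "C \<in> carrier (G Mod H)" "C \<otimes>\<^bsub>G Mod H\<^esub> (H #> x) = \<one>\<^bsub>G Mod H\<^esub>"
  shows "H #> inv x = C"
proof -
  interpret Q: group "G Mod H"
    by (rule factorgroup_is_group)
  have "H #> inv x = inv\<^bsub>G Mod H\<^esub> (H #> x)"
    using assms(1) by (simp add: inv_FactGroup carrier_FactGroup rcos_inv)
  also have "\<dots> = C"
    using assms by (intro Q.inv_equality) (auto simp: carrier_FactGroup)
  finally show ?thesis .
qed

definition mirror_extend :: "('a, 'b) monoid_scheme \<Rightarrow> nat \<Rightarrow> (nat \<Rightarrow> 'a) \<Rightarrow> nat \<Rightarrow> 'a" where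
  "mirror_extend G n r j =
     (if j = 0 then \<one>\<^bsub>G\<^esub> else if 2 * j < n then r j else inv\<^bsub>G\<^esub> (r (n - j)))"

lemma (in group) mirror_extend_closed:
  "(\<And>j. j < n \<Longrightarrow> r j \<in> carrier G) \<Longrightarrow> j < n \<Longrightarrow> mirror_extend G n r j \<in> carrier G"
  by (simp add: mirror_extend_def)

lemma (in group) mirror_extend_mirror:
  assumes "odd n" "\<And>j. j < n \<Longrightarrow> r j \<in> carrier G" "0 < j" "j < n"
  shows "mirror_extend G n r (n - j) = inv (mirror_extend G n r j)"
proof (cases "2 * j < n")
  case True
  then have "\<not> 2 * (n - j) < n" "n - j \<noteq> 0" "n - (n - j) = j"
    using assms by auto
  then show ?thesis
    using True assms by (simp add: mirror_extend_def)
next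
  case False
  then have "2 * (n - j) < n" "n - j \<noteq> 0"
    using assms by presburger+
  then show ?thesis
    using False assms by (simp add: mirror_extend_def)
qed

lemma (in normal) mirror_extend_coset:
  assumes c: "\<And>j. j < n \<Longrightarrow> c j \<in> carrier (G Mod H)" "c 0 = \<one>\<^bsub>G Mod H\<^esub>"
    and c_mirror: "\<And>j. 0 < j \<Longrightarrow> j < n \<Longrightarrow> c j \<otimes>\<^bsub>G Mod H\<^esub> c (n - j) = \<one>\<^bsub>G Mod H\<^esub>"
    and r: "\<And>j. j < n \<Longrightarrow> r j \<in> carrier G" "\<And>j. j < n \<Longrightarrow> H #> r j = c j"
    and j: "j < n"
  shows "H #> mirror_extend G n r j = c j"
proof -
  consider "j = 0" | "0 < j" "2 * j < n" | "0 < j" "\<not> 2 * j < n"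
    by linarith
  then show ?thesis
  proof cases
    case 1
    then show ?thesis
      using c subset by (simp add: mirror_extend_def)
  next
    case 2
    then show ?thesis
      using r j by (simp add: mirror_extend_def)
  next
    case 3
    then show ?thesis
      using c_mirror[of j] c(1) r j by (simp add: mirror_extend_def rcos_inv_eq)
  qed
qed

lemma (in normal) symmetric_lift:
  fixes n :: nat
  defines "n \<equiv> card (carrier (G Mod H))"
  assumes odd: "odd n" and c: "symmetric_harmonious_seq (G Mod H) c"
  obtains a where "\<And>j. j < n \<Longrightarrow> a j \<in> carrier G" "\<And>j. j < n \<Longrightarrow> H #> a j = c j"
    "a 0 = \<one>" "\<And>j. 0 < j \<Longrightarrow> j < n \<Longrightarrow> a (n - j) = inv (a j)"
proof -
  interpret Q: group "G Mod H"
    by (rule factorgroup_is_group)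
  have c_closed: "\<And>j. j < n \<Longrightarrow> c j \<in> carrier (G Mod H)"
    and c_mirror: "\<And>j. 0 < j \<Longrightarrow> j < n \<Longrightarrow> c j \<otimes>\<^bsub>G Mod H\<^esub> c (n - j) = \<one>\<^bsub>G Mod H\<^esub>"
    using c harmonious_seq_closed by (auto simp: n_def symmetric_harmonious_seq_def order_def)
  have c_zero: "c 0 = \<one>\<^bsub>G Mod H\<^esub>"
    using Q.symmetric_harmonious_seq_zero c odd by (simp add: n_def order_def)
  define r where "r j = (SOME x. x \<in> carrier G \<and> H #> x = c j)" for j
  have r: "r j \<in> carrier G" "H #> r j = c j" if "j < n" for j
  proof -
    have "\<exists>x. x \<in> carrier G \<and> H #> x = c j"
      using c_closed[OF that] by (auto simp: carrier_FactGroup)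
    then show "r j \<in> carrier G" "H #> r j = c j"
      unfolding r_def by (metis (mono_tags, lifting) someI_ex)+
  qed
  show ?thesis
  proof
    show "mirror_extend G n r j \<in> carrier G" if "j < n" for j
      using r(1) that by (rule mirror_extend_closed)
    show "H #> mirror_extend G n r j = c j" if "j < n" for j
      using c_closed c_zero c_mirror r that by (rule mirror_extend_coset)
    show "mirror_extend G n r (n - j) = inv (mirror_extend G n r j)" if "0 < j" "j < n" for j
      using odd r(1) that by (rule mirror_extend_mirror)
  qed (simp add: mirror_extend_def)
qed

locale odd_harmonious_extension = normal H G for H and G (structure) +
  fixes m n :: nat and h :: "nat \<Rightarrow> 'a" and c :: "nat \<Rightarrow> 'a set" and a :: "nat \<Rightarrow> 'a"
  assumes card_subgroup: "card H = m" and odd_m: "odd m"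
    and card_quotient: "card (carrier (G Mod H)) = n" and odd_n: "odd n"
    and h: "symmetric_harmonious_seq (G\<lparr>carrier := H\<rparr>) h"
    and c: "harmonious_seq (G Mod H) c"
    and a_closed: "\<And>j. j < n \<Longrightarrow> a j \<in> carrier G"
    and a_coset: "\<And>j. j < n \<Longrightarrow> H #> a j = c j"
    and a_zero: "a 0 = \<one>"
    and a_mirror: "\<And>j. 0 < j \<Longrightarrow> j < n \<Longrightarrow> a (n - j) = inv (a j)"
begin

lemma m_pos: "0 < m"
  using odd_m by (rule odd_pos)

lemma n_pos: "0 < n"
  using odd_n by (rule odd_pos)

lemma subgroup_group: "group (G\<lparr>carrier := H\<rparr>)"
  by (rule subgroup_is_group) (rule is_group)

lemma order_subgroup: "order (G\<lparr>carrier := H\<rparr>) = m"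
  by (simp add: order_def card_subgroup)

lemma order_eq: "order G = n * m"
  using lagrange[OF subgroup_axioms] card_subgroup card_quotient
  by (simp add: FactGroup_def mult.commute)

lemma finite_carrier: "finite (carrier G)"
  using order_eq m_pos n_pos by (simp add: order_def card_ge_0_finite)

lemma h_in_H: "t < m \<Longrightarrow> h t \<in> H"
  using h harmonious_seq_closed[of "G\<lparr>carrier := H\<rparr>" h t]
  by (simp add: symmetric_harmonious_seq_def order_subgroup)

lemma h_closed: "t < m \<Longrightarrow> h t \<in> carrier G"
  using h_in_H subset by blast

lemma c_inj: "inj_on c {0..<n}"
  using c by (auto simp: harmonious_seq_def card_quotient dest: bij_betw_imp_inj_on)

lemma c_products_inj: "inj_on (\<lambda>j. c j \<otimes>\<^bsub>G Mod H\<^esub> c ((j + 1) mod n)) {0..<n}"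
  using c by (auto simp: harmonious_seq_def card_quotient dest: bij_betw_imp_inj_on)

definition shift :: "nat \<Rightarrow> nat" where
  "shift j = (if 2 * j < n then 0 else 1)"

lemma shift_zero: "shift 0 = 0"
  using n_pos by (simp add: shift_def)

lemma shift_mono: "j \<le> j' \<Longrightarrow> shift j \<le> shift j'"
  by (simp add: shift_def)

definition layer :: "nat \<Rightarrow> nat \<Rightarrow> 'a" where
  "layer j t = h ((t + shift j) mod m)"

lemma layer_in_H: "layer j t \<in> H"
  using h_in_H m_pos by (simp add: layer_def)

lemma layer_closed: "layer j t \<in> carrier G"
  using layer_in_H subset by blast

lemma layer_zero: "t < m \<Longrightarrow> layer 0 t = h t"
  by (simp add: layer_def shift_zero)

lemma shifted_products_inj:
  assumes "s \<le> s'" "s' \<le> 1"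
  shows "inj_on (\<lambda>t. h ((t + s) mod m) \<otimes> h ((t + s') mod m)) {0..<m}"
  using group.harmonious_seq_shifted_products_inj[OF subgroup_group _ _ assms] h odd_m
  by (simp add: order_subgroup symmetric_harmonious_seq_def)

lemma layer_products_inj:
  assumes "shift j \<le> shift j'"
  shows "inj_on (\<lambda>t. layer j t \<otimes> layer j' t) {0..<m}"
  using shifted_products_inj[OF assms] by (simp add: layer_def shift_def)

lemma layer_inj:
  assumes "t < m" "t' < m" "layer j t = layer j t'"
  shows "t = t'"
proof -
  have "layer j t \<otimes> layer j t = layer j t' \<otimes> layer j t'"
    using assms by simp
  then show ?thesis
    by (rule inj_onD[OF layer_products_inj[OF order_refl]]) (use assms in auto)
qed

lemma layer_mirror:
  assumes "0 < j" "j < n" "t < m"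
  shows "layer j t \<otimes> layer (n - j) (m - 1 - t) = \<one>"
proof -
  have "shift j + shift (n - j) = 1"
    using assms odd_n by (simp add: shift_def) presburger
  then have "(t + shift j) + (m - 1 - t + shift (n - j)) = m"
    using assms by linarith
  then have "((t + shift j) + (m - 1 - t + shift (n - j))) mod m = 0"
    by simp
  then show ?thesis
    using group.symmetric_harmonious_seq_inverse_mod[OF subgroup_group] h odd_m
    by (simp add: layer_def order_subgroup)
qed

lemma prefix_closed: "k \<le> n \<Longrightarrow> prefix_prod G a k \<in> carrier G"
  using a_closed by (intro prefix_prod_closed) auto

lemma prefix_one: "prefix_prod G a (Suc 0) = \<one>"
  by (simp add: prefix_prod.simps a_zero)

lemma prefix_mirror:
  assumes "0 < k" "k \<le> n"
  shows "prefix_prod G a (n + 1 - k) = prefix_prod G a k"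
  using odd_n a_closed a_mirror assms by (rule prefix_prod_mirror)

lemma prefix_total: "prefix_prod G a n = \<one>"
  using prefix_mirror[of 1] n_pos prefix_one by simp

definition block :: "nat \<Rightarrow> nat \<Rightarrow> 'a" where
  "block j t = inv (prefix_prod G a j) \<otimes> layer j t \<otimes> prefix_prod G a (Suc j)"

lemma block_closed: "j < n \<Longrightarrow> block j t \<in> carrier G"
  by (simp add: block_def prefix_closed layer_closed)

lemma block_zero: "block 0 t = layer 0 t"
  by (simp add: block_def prefix_one layer_closed)

lemma block_coset:
  assumes "j < n"
  shows "H #> block j t = c j"
proof -
  have "H #> block j t = H #> (inv (prefix_prod G a j) \<otimes> prefix_prod G a (Suc j))"
    unfolding block_def using assms by (intro rcos_conj_mult layer_in_H prefix_closed) auto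
  also have "\<dots> = c j"
    using assms prefix_closed[of j] a_closed a_coset
    by (simp add: prefix_prod.simps m_assoc[symmetric])
  finally show ?thesis .
qed

lemma block_inj: "inj_on (\<lambda>(j, t). block j t) ({0..<n} \<times> {0..<m})"
proof (rule inj_onI, clarsimp)
  fix j t j' t'
  assume jt: "j < n" "t < m" "j' < n" "t' < m" and eq: "block j t = block j' t'"
  have "c j = c j'"
    using block_coset eq jt by metis
  then have j: "j = j'"
    using inj_onD[OF c_inj] jt by simp
  then have "layer j t = layer j t'"
    using eq jt by (simp add: block_def prefix_closed layer_closed m_assoc)
  then show "j = j' \<and> t = t'"
    using j jt layer_inj by blast
qed

lemma block_mirror:
  assumes "0 < j" "j < n" "t < m"
  shows "block j t \<otimes> block (n - j) (m - 1 - t) = \<one>"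
proof -
  have "prefix_prod G a (n - j) = prefix_prod G a (Suc j)"
    using prefix_mirror[of "Suc j"] assms by simp
  moreover have "prefix_prod G a (Suc (n - j)) = prefix_prod G a j"
    using prefix_mirror[of j] assms by (simp add: Suc_diff_le)
  ultimately have "block j t \<otimes> block (n - j) (m - 1 - t) =
      inv (prefix_prod G a j) \<otimes> (layer j t \<otimes> layer (n - j) (m - 1 - t)) \<otimes> prefix_prod G a j"
    using assms by (simp add: block_def prefix_closed layer_closed m_assoc)
  then show ?thesis
    using layer_mirror[OF assms] assms by (simp add: prefix_closed)
qed

lemma block_zero_mirror:
  assumes "0 < t" "t < m"
  shows "block 0 t \<otimes> block 0 (m - t) = \<one>"
  using h assms by (simp add: block_zero layer_zero symmetric_harmonious_seq_def card_subgroup)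

definition next_block :: "nat \<Rightarrow> nat \<Rightarrow> 'a" where
  "next_block j t = (if j + 1 < n then block (j + 1) t else block 0 ((t + 1) mod m))"

lemma next_block_closed: "next_block j t \<in> carrier G"
  using n_pos by (simp add: next_block_def block_closed)

lemma next_block_coset:
  assumes "j < n"
  shows "H #> next_block j t = c ((j + 1) mod n)"
proof (cases "j + 1 < n")
  case False
  then have "j + 1 = n"
    using assms by simp
  then show ?thesis
    using n_pos by (simp add: next_block_def block_coset)
qed (simp add: next_block_def block_coset)

lemma block_next_block:
  "j + 1 < n \<Longrightarrow> block j t \<otimes> next_block j t =
     inv (prefix_prod G a j) \<otimes> (layer j t \<otimes> layer (j + 1) t) \<otimes> prefix_prod G a (j + 2)"
  "block (n - 1) t \<otimes> next_block (n - 1) t =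
     inv (prefix_prod G a (n - 1)) \<otimes> (layer (n - 1) t \<otimes> h ((t + 1) mod m))"
proof -
  show "j + 1 < n \<Longrightarrow> block j t \<otimes> next_block j t =
     inv (prefix_prod G a j) \<otimes> (layer j t \<otimes> layer (j + 1) t) \<otimes> prefix_prod G a (j + 2)"
    by (simp add: next_block_def block_def prefix_closed layer_closed m_assoc numeral_2_eq_2)
  have "block (n - 1) t = inv (prefix_prod G a (n - 1)) \<otimes> layer (n - 1) t"
    using n_pos prefix_total by (simp add: block_def prefix_closed layer_closed)
  moreover have "next_block (n - 1) t = h ((t + 1) mod m)"
    using n_pos m_pos by (simp add: next_block_def block_zero layer_zero)
  ultimately show "block (n - 1) t \<otimes> next_block (n - 1) t =
     inv (prefix_prod G a (n - 1)) \<otimes> (layer (n - 1) t \<otimes> h ((t + 1) mod m))"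
    using m_pos h_in_H by (simp add: prefix_closed layer_closed m_assoc)
qed

lemma block_products_inj:
  "inj_on (\<lambda>(j, t). block j t \<otimes> next_block j t) ({0..<n} \<times> {0..<m})"
proof (rule inj_onI, clarsimp)
  fix j t j' t'
  assume jt: "j < n" "t < m" "j' < n" "t' < m"
    and eq: "block j t \<otimes> next_block j t = block j' t' \<otimes> next_block j' t'"
  have coset: "H #> (block j t \<otimes> next_block j t) = c j <#> c ((j + 1) mod n)" if "j < n" for j t
    using that by (simp add: rcos_sum[symmetric] block_closed next_block_closed block_coset
        next_block_coset)
  have "c j \<otimes>\<^bsub>G Mod H\<^esub> c ((j + 1) mod n) = c j' \<otimes>\<^bsub>G Mod H\<^esub> c ((j' + 1) mod n)"
    using coset[of j t] coset[of j' t'] eq jt by simp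
  then have j: "j = j'"
    using inj_onD[OF c_products_inj] jt by simp
  show "j = j' \<and> t = t'"
  proof (cases "j + 1 < n")
    case True
    then have "layer j t \<otimes> layer (j + 1) t = layer j t' \<otimes> layer (j + 1) t'"
      using eq j block_next_block(1) by (simp add: prefix_closed layer_closed)
    then show ?thesis
      using j jt inj_onD[OF layer_products_inj[OF shift_mono[of j "j + 1"]], of t t'] by simp
  next
    case False
    then have "j = n - 1"
      using jt by simp
    then have "layer j t \<otimes> h ((t + 1) mod m) = layer j t' \<otimes> h ((t' + 1) mod m)"
      using eq j block_next_block(2) m_pos by (simp add: prefix_closed layer_closed h_closed)
    moreover have "shift j \<le> 1"
      by (simp add: shift_def)
    ultimately show ?thesis
      using j jt inj_onD[OF shifted_products_inj, of "shift j" 1 t t'] by (simp add: layer_def)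
  qed
qed

definition seq :: "nat \<Rightarrow> 'a" where
  "seq k = block (k mod n) (k div n)"

lemma seq_block: "j < n \<Longrightarrow> seq (j + n * t) = block j t"
  by (simp add: seq_def)

lemma seq_block_zero: "seq (n * t) = block 0 t"
  using seq_block[OF n_pos] by simp

lemma seq_successor:
  assumes jt: "j < n" "t < m"
  shows "seq (Suc (j + n * t) mod (n * m)) = next_block j t"
proof (cases "j + 1 < n")
  case True
  then show ?thesis
    using block_index_Suc_mod[OF jt] seq_block[OF True, of t] by (simp add: next_block_def)
next
  case False
  then show ?thesis
    using block_index_Suc_mod[OF jt] by (simp add: seq_block_zero next_block_def)
qed

lemma seq_bij: "bij_betw seq {0..<order G} (carrier G)"
  unfolding order_eq
proof (rule bij_betw_block_indexI)
  show "inj_on (\<lambda>(j, t). seq (j + n * t)) ({0..<n} \<times> {0..<m})"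
    using block_inj by (rule inj_on_cong[THEN iffD1, rotated]) (auto simp: seq_block)
qed (use finite_carrier order_eq in \<open>simp_all add: seq_block block_closed order_def\<close>)

lemma seq_products_bij:
  "bij_betw (\<lambda>k. seq k \<otimes> seq ((k + 1) mod order G)) {0..<order G} (carrier G)"
  unfolding order_eq
proof (rule bij_betw_block_indexI)
  show "inj_on (\<lambda>(j, t). seq (j + n * t) \<otimes> seq ((j + n * t + 1) mod (n * m)))
      ({0..<n} \<times> {0..<m})"
    using block_products_inj
    by (rule inj_on_cong[THEN iffD1, rotated]) (auto simp: seq_block seq_successor)
qed (use finite_carrier order_eq in \<open>simp_all add: seq_block seq_successor block_closed
      next_block_closed order_def\<close>)

lemma seq_mirror:
  assumes "0 < k" "k < order G"
  shows "seq k \<otimes> seq (order G - k) = \<one>"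
proof -
  define j t where "j = k mod n" and "t = k div n"
  have jt: "j < n" "t < m" "k = j + n * t"
    using assms n_pos order_eq by (auto simp: j_def t_def less_mult_imp_div_less mult.commute)
  show ?thesis
  proof (cases "j = 0")
    case True
    have "n * m - n * t = n * (m - t)"
      by (simp add: diff_mult_distrib2)
    then show ?thesis
      using True jt assms block_zero_mirror[of t] by (simp add: order_eq seq_block_zero)
  next
    case False
    have "order G - k = (n - j) + n * (m - 1 - t)"
      using block_index_mirror[OF jt(1,2)] False jt(3) order_eq by simp
    moreover have "seq ((n - j) + n * (m - 1 - t)) = block (n - j) (m - 1 - t)"
      using False jt by (intro seq_block) simp
    ultimately show ?thesis
      using False jt block_mirror[of j t] by (simp add: seq_block)
  qed
qed

theorem seq_symmetric_harmonious: "symmetric_harmonious_seq G seq"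
  using seq_bij seq_products_bij seq_mirror
  by (simp add: symmetric_harmonious_seq_def harmonious_seq_iff order_def)

end

theorem lemma1:
  fixes G (structure) and H :: "'a set"
  assumes "group G"
    and "finite (carrier G)"
    and "H \<lhd> G"
    and "odd (card H)"
    and "odd (card (carrier (G Mod H)))"
    and "symmetric_harmonious (G\<lparr>carrier := H\<rparr>)"
    and "symmetric_harmonious (G Mod H)"
  shows "symmetric_harmonious G"
proof -
  interpret normal H G
    by (rule assms(3))
  obtain h where h: "symmetric_harmonious_seq (G\<lparr>carrier := H\<rparr>) h"
    using assms(6) symmetric_harmonious_iff_seq by blast
  obtain c where c: "symmetric_harmonious_seq (G Mod H) c"
    using assms(7) symmetric_harmonious_iff_seq by blast
  let ?n = "card (carrier (G Mod H))"
  obtain a where "\<And>j. j < ?n \<Longrightarrow> a j \<in> carrier G" "\<And>j. j < ?n \<Longrightarrow> H #> a j = c j"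
    "a 0 = \<one>" "\<And>j. 0 < j \<Longrightarrow> j < ?n \<Longrightarrow> a (?n - j) = inv (a j)"
    using symmetric_lift[OF assms(5) c] by blast
  then interpret odd_harmonious_extension H G "card H" ?n h c a
    using assms(4,5) h c by unfold_locales (simp_all add: symmetric_harmonious_seq_def)
  show ?thesis
    using seq_symmetric_harmonious symmetric_harmonious_iff_seq by blast
qed

end
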